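(* Let $k\in\mathbb{R}_{\ge0}$ and $p\in\mathbb{R}_+$. Let $(x,y,z)$ be a triple of the classical Euclid tree with $x,y,z>k/p$, $(X,Y,Z)$ the corresponding triple of the $k$-generalized Euclid tree, and $(l,m,n)=(X/x,Y/y,Z/z)$. If $\max(|l-m|,|m-n|,|l-n|)<2p$, then for every $i\in\{1,2,3\}$ the comparison triple $(l',m',n')$ of $\mathcal{M}_{i;k}(X,Y,Z)$ and $\mathcal{M}_i(x,y,z)$ also satisfies $\max(|l'-m'|,|m'-n'|,|l'-n'|)<2p$; hence this bound persists under any further sequence of mutations.
   Context: For $k\in\mathbb{R}_{\ge0}$: $\mathcal{M}_{1;k}(X,Y,Z)=(k+Y+Z,Y,Z)$, $\mathcal{M}_{2;k}(X,Y,Z)=(X,k+X+Z,Z)$, $\mathcal{M}_{3;k}(X,Y,Z)=(X,Y,k+X+Y)$ on $\mathbb{R}_+^3$, $\mathcal{M}_i=\mathcal{M}_{i;0}$. The classical Euclid tree consists of triples obtained from a $0$-initial triple $(a,b,c)\in\mathbb{R}_+^3$ by applying the $\mathcal{M}_i$ along a finite reduced index sequence (consecutive indices distinct); the $k$-generalized Euclid tree consists of triples obtained from a $k$-initial triple $(A,B,C)\in\mathbb{R}_+^3$ ($A\ne B+C+k$, $B\ne A+C+k$, $C\ne A+B+k$) by applying the $\mathcal{M}_{i;k}$; corresponding triples are obtained along the same index sequence. *)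

theory Defs
  imports Main Complex_Main
begin

type_synonym triple = "real \<times> real \<times> real"

text \<open>The mutation M_{i;k}; indices are 1,2,3 (other indices act as identity, never used).\<close>
fun mut :: "real \<Rightarrow> nat \<Rightarrow> triple \<Rightarrow> triple" where
  "mut k i (X, Y, Z) =
     (if i = 1 then (k + Y + Z, Y, Z)
      else if i = 2 then (X, k + X + Z, Z)
      else if i = 3 then (X, Y, k + X + Y)
      else (X, Y, Z))"

definition apply_seq :: "real \<Rightarrow> nat list \<Rightarrow> triple \<Rightarrow> triple" where
  "apply_seq k is t = foldl (\<lambda>u i. mut k i u) t is"

definition reduced_seq :: "nat list \<Rightarrow> bool" where
  "reduced_seq is \<longleftrightarrow> set is \<subseteq> {1,2,3} \<and>
     (\<forall>j. Suc j < length is \<longrightarrow> is ! j \<noteq> is ! Suc j)"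

definition pos_triple :: "triple \<Rightarrow> bool" where
  "pos_triple t \<longleftrightarrow> (case t of (A, B, C) \<Rightarrow> A > 0 \<and> B > 0 \<and> C > 0)"

definition initial_triple :: "real \<Rightarrow> triple \<Rightarrow> bool" where
  "initial_triple k t \<longleftrightarrow> pos_triple t \<and>
     (case t of (A, B, C) \<Rightarrow> A \<noteq> B + C + k \<and> B \<noteq> A + C + k \<and> C \<noteq> A + B + k)"

definition comparison :: "triple \<Rightarrow> triple \<Rightarrow> triple" where
  "comparison T t = (case T of (X, Y, Z) \<Rightarrow> case t of (x, y, z) \<Rightarrow> (X / x, Y / y, Z / z))"

definition spread :: "triple \<Rightarrow> real" where
  "spread t = (case t of (l, m, n) \<Rightarrow> max \<bar>l - m\<bar> (max \<bar>m - n\<bar> \<bar>l - n\<bar>))"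

end

theory Submission
  imports Defs
begin

text \<open>After mutating the first coordinate, the new ratio is
  \<open>(k + m y + n z) / (y + z)\<close>: the weighted mean of \<open>m\<close> and \<open>n\<close> shifted up by
  \<open>k / (y + z)\<close>. The mean stays within the old spread of \<open>m\<close> and \<open>n\<close>, and
  \<open>y, z > k / p\<close> keeps the shift small enough that the new ratio still lies
  within \<open>2 p\<close> of both.\<close>

lemma spread_less_iff:
  "spread (l, m, n) < d \<longleftrightarrow> \<bar>l - m\<bar> < d \<and> \<bar>m - n\<bar> < d \<and> \<bar>l - n\<bar> < d"
  by (simp add: spread_def)

lemma abs_shifted_mean_minus_less:
  fixes k d y z m n :: real
  assumes "0 < y" "0 < z" "0 \<le> k" "k \<le> d * y" "\<bar>m - n\<bar> < d"
  shows "\<bar>(k + m * y + n * z) / (y + z) - m\<bar> < d"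
proof -
  have "(k + m * y + n * z) / (y + z) - m = (k + (n - m) * z) / (y + z)"
    using assms by (simp add: field_simps)
  moreover have "\<bar>(n - m) * z\<bar> < d * z"
    using assms by (simp add: abs_mult abs_minus_commute)
  then have "\<bar>k + (n - m) * z\<bar> < d * (y + z)"
    using assms by (simp add: abs_less_iff algebra_simps)
  ultimately show ?thesis
    using assms by (simp add: abs_divide pos_divide_less_eq)
qed

lemma abs_shifted_mean_minus_less_both:
  fixes k d y z m n :: real
  assumes "0 < y" "0 < z" "0 \<le> k" "k \<le> d * y" "k \<le> d * z" "\<bar>m - n\<bar> < d"
  shows "\<bar>(k + m * y + n * z) / (y + z) - m\<bar> < d"
    and "\<bar>(k + m * y + n * z) / (y + z) - n\<bar> < d"
  using abs_shifted_mean_minus_less[of y z k d m n] abs_shifted_mean_minus_less[of z y k d n m]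
    assms
  by (simp_all add: abs_minus_commute ac_simps)

lemma spread_comparison_mut_less:
  fixes k d x y z X Y Z :: real
  assumes "0 < x" "0 < y" "0 < z" "0 \<le> k" "k \<le> d * x" "k \<le> d * y" "k \<le> d * z"
    and "spread (comparison (X, Y, Z) (x, y, z)) < d"
    and "i \<in> {1, 2, 3}"
  shows "spread (comparison (mut k i (X, Y, Z)) (mut 0 i (x, y, z))) < d"
proof -
  define l m n where "l = X / x" and "m = Y / y" and "n = Z / z"
  have XYZ: "X = l * x" "Y = m * y" "Z = n * z"
    using assms(1-3) by (simp_all add: l_def m_def n_def)
  have lmn: "\<bar>l - m\<bar> < d" "\<bar>m - n\<bar> < d" "\<bar>l - n\<bar> < d"
    using assms(8) by (simp_all add: comparison_def spread_less_iff l_def m_def n_def)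
  from assms(9) consider "i = 1" | "i = 2" | "i = 3" by blast
  then show ?thesis
  proof cases
    case 1
    with lmn abs_shifted_mean_minus_less_both[of y z k d m n] assms show ?thesis
      by (simp add: XYZ comparison_def spread_less_iff)
  next
    case 2
    with lmn abs_shifted_mean_minus_less_both[of x z k d l n] assms show ?thesis
      by (simp add: XYZ comparison_def spread_less_iff abs_minus_commute)
  next
    case 3
    with lmn abs_shifted_mean_minus_less_both[of x y k d l m] assms show ?thesis
      by (simp add: XYZ comparison_def spread_less_iff abs_minus_commute)
  qed
qed

theorem lemma5p7:
  fixes k p x y z X Y Z :: real and "is" :: "nat list" and a b c A B C :: real
  assumes "k \<ge> 0" and "p > 0"
    and "reduced_seq is"
    and "initial_triple 0 (a, b, c)"
    and "initial_triple k (A, B, C)"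
    and "apply_seq 0 is (a, b, c) = (x, y, z)"
    and "apply_seq k is (A, B, C) = (X, Y, Z)"
    and "x > k / p" and "y > k / p" and "z > k / p"
    and "spread (comparison (X, Y, Z) (x, y, z)) < 2 * p"
  shows "\<forall>i \<in> {1, 2, 3}. spread (comparison (mut k i (X, Y, Z)) (mut 0 i (x, y, z))) < 2 * p"
proof -
  have bound: "0 < w \<and> k \<le> 2 * p * w" if "k / p < w" for w
  proof -
    have "k < p * w"
      using that assms(2) by (simp add: pos_divide_less_eq mult.commute)
    moreover from this assms(1) have "0 < p * w" by linarith
    moreover from this assms(2) have "0 < w" by (simp add: zero_less_mult_iff)
    ultimately show ?thesis by linarith
  qed
  show ?thesis
    using bound[OF assms(8)] bound[OF assms(9)] bound[OF assms(10)] assms(1,11)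
    by (blast intro: spread_comparison_mut_less)
qed

end
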